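(* Let $\Psi$ be a performance metric that satisfies TP/TN monotonicity. Then $\Psi$ satisfies TP monotonicity.
   Context: Labels are binary. For predictions $\mathbf{s}\in\{0,1\}^n$ and labels $\mathbf{y}\in\{0,1\}^n$ let $\widehat{TP}=\frac1n\sum_i s_iy_i$, $\widehat{TN}=\frac1n\sum_i(1-s_i)(1-y_i)$, $v(\mathbf{s})=\frac1n\sum_i s_i$, $p(\mathbf{y})=\frac1n\sum_iy_i$ (assume $0<p<1$), true positive rate $r_p=\widehat{TP}/p$ and true negative rate $r_n=\widehat{TN}/(1-p)$. A metric $\Psi$ of the empirical confusion matrix can be written both as $\Psi=\Phi(\widehat{TP},v,p)$ and as $\Psi=\Gamma(r_p,r_n,p)$ (note $\widehat{TN}=1-v-p+\widehat{TP}$). $\Psi$ is TP monotonic if $u_1>u_2$ with $v,p$ fixed implies $\Phi(u_1,v,p)>\Phi(u_2,v,p)$. $\Psi$ is TP/TN monotonic if $r_{p1}>r_{p2}$ and $r_{n1}>r_{n2}$ with $p$ fixed imply $\Gamma(r_{p1},r_{n1},p)>\Gamma(r_{p2},r_{n2},p)$. *)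

theory Defs
  imports Complex_Main
begin

definition TP_hat :: "bool list \<Rightarrow> bool list \<Rightarrow> real" where
  "TP_hat s y = (\<Sum>i<length y. of_bool (s ! i) * of_bool (y ! i)) / real (length y)"

definition TN_hat :: "bool list \<Rightarrow> bool list \<Rightarrow> real" where
  "TN_hat s y = (\<Sum>i<length y. (1 - of_bool (s ! i)) * (1 - of_bool (y ! i))) / real (length y)"

definition vrate :: "bool list \<Rightarrow> real" where
  "vrate s = (\<Sum>i<length s. of_bool (s ! i)) / real (length s)"

definition prate :: "bool list \<Rightarrow> real" where
  "prate y = (\<Sum>i<length y. of_bool (y ! i)) / real (length y)"

definition tpr :: "bool list \<Rightarrow> bool list \<Rightarrow> real" where
  "tpr s y = TP_hat s y / prate y"

definition tnr :: "bool list \<Rightarrow> bool list \<Rightarrow> real" where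
  "tnr s y = TN_hat s y / (1 - prate y)"

definition admissible :: "bool list \<Rightarrow> bool list \<Rightarrow> bool" where
  "admissible s y \<longleftrightarrow> length s = length y \<and> 0 < prate y \<and> prate y < 1"

text \<open>A metric is given by its representation Phi(TP, v, p); its representation
  Gamma(r_p, r_n, p) is obtained via TP = r_p p and v = 1 - p + TP - TN with TN = r_n (1-p).\<close>
definition Gamma_of :: "(real \<Rightarrow> real \<Rightarrow> real \<Rightarrow> real) \<Rightarrow> real \<Rightarrow> real \<Rightarrow> real \<Rightarrow> real" where
  "Gamma_of Phi rp rn p = Phi (rp * p) (1 - p + rp * p - rn * (1 - p)) p"

definition TP_monotonic :: "(real \<Rightarrow> real \<Rightarrow> real \<Rightarrow> real) \<Rightarrow> bool" where
  "TP_monotonic Phi \<longleftrightarrow>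
    (\<forall>s1 y1 s2 y2. admissible s1 y1 \<and> admissible s2 y2 \<and>
       vrate s1 = vrate s2 \<and> prate y1 = prate y2 \<and> TP_hat s1 y1 > TP_hat s2 y2 \<longrightarrow>
       Phi (TP_hat s1 y1) (vrate s1) (prate y1) > Phi (TP_hat s2 y2) (vrate s2) (prate y2))"

definition TPTN_monotonic :: "(real \<Rightarrow> real \<Rightarrow> real \<Rightarrow> real) \<Rightarrow> bool" where
  "TPTN_monotonic Phi \<longleftrightarrow>
    (\<forall>s1 y1 s2 y2. admissible s1 y1 \<and> admissible s2 y2 \<and>
       prate y1 = prate y2 \<and> tpr s1 y1 > tpr s2 y2 \<and> tnr s1 y1 > tnr s2 y2 \<longrightarrow>
       Gamma_of Phi (tpr s1 y1) (tnr s1 y1) (prate y1) > Gamma_of Phi (tpr s2 y2) (tnr s2 y2) (prate y2))"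

end

theory Submission
  imports Defs
begin

text \<open>With p fixed, r_p is an increasing affine function of TP; with v fixed as well,
  TN = 1 - v - p + TP, so r_n is one too. Hence a strict increase of TP at fixed v and p
  increases both rates, and Gamma evaluated at the rates is just Phi evaluated at (TP, v, p).\<close>

lemma TN_hat_eq:
  assumes "length s = length y" and "y \<noteq> []"
  shows "TN_hat s y = 1 - vrate s - prate y + TP_hat s y"
proof -
  let ?n = "length y"
  have "(\<Sum>i<?n. (1 - of_bool (s ! i)) * (1 - of_bool (y ! i)) :: real)
      = (\<Sum>i<?n. 1 - of_bool (s ! i) - of_bool (y ! i) + of_bool (s ! i) * of_bool (y ! i))"
    by (rule sum.cong) (auto simp: algebra_simps)
  also have "\<dots> = real ?n - (\<Sum>i<?n. of_bool (s ! i)) - (\<Sum>i<?n. of_bool (y ! i))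
      + (\<Sum>i<?n. of_bool (s ! i) * of_bool (y ! i))"
    by (simp add: sum.distrib sum_subtractf)
  finally show ?thesis
    using assms by (simp add: TN_hat_def vrate_def prate_def TP_hat_def diff_divide_distrib
        add_divide_distrib)
qed

lemma admissible_nonempty: "admissible s y \<Longrightarrow> y \<noteq> []"
  by (auto simp: admissible_def prate_def)

lemma admissible_TN_hat_eq:
  "admissible s y \<Longrightarrow> TN_hat s y = 1 - vrate s - prate y + TP_hat s y"
  by (simp add: TN_hat_eq admissible_nonempty admissible_def)

lemma Gamma_of_rates:
  assumes "admissible s y"
  shows "Gamma_of Phi (tpr s y) (tnr s y) (prate y) = Phi (TP_hat s y) (vrate s) (prate y)"
  using assms admissible_TN_hat_eq[OF assms]
  by (simp add: Gamma_of_def tpr_def tnr_def admissible_def)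

theorem proposition5:
  fixes Phi :: "real \<Rightarrow> real \<Rightarrow> real \<Rightarrow> real"
  assumes "TPTN_monotonic Phi"
  shows "TP_monotonic Phi"
  unfolding TP_monotonic_def
proof (intro allI impI, elim conjE)
  fix s1 y1 s2 y2
  assume adm1: "admissible s1 y1" and adm2: "admissible s2 y2"
    and v: "vrate s1 = vrate s2" and p: "prate y1 = prate y2"
    and TP_less: "TP_hat s1 y1 > TP_hat s2 y2"
  have p_bounds: "0 < prate y1" "prate y1 < 1"
    using adm1 by (auto simp: admissible_def)
  have "tpr s1 y1 > tpr s2 y2"
    using TP_less p p_bounds by (simp add: tpr_def divide_strict_right_mono)
  moreover have "tnr s1 y1 > tnr s2 y2"
    using TP_less p v p_bounds admissible_TN_hat_eq[OF adm1] admissible_TN_hat_eq[OF adm2]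
    by (simp add: tnr_def divide_strict_right_mono)
  ultimately have "Gamma_of Phi (tpr s1 y1) (tnr s1 y1) (prate y1)
      > Gamma_of Phi (tpr s2 y2) (tnr s2 y2) (prate y2)"
    using assms adm1 adm2 p unfolding TPTN_monotonic_def by blast
  then show "Phi (TP_hat s1 y1) (vrate s1) (prate y1) > Phi (TP_hat s2 y2) (vrate s2) (prate y2)"
    by (simp add: Gamma_of_rates adm1 adm2)
qed

end
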